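(* Assume the setting and hypotheses of the context (assumptions (A1)–(A3) on the kernel and (I1)–(I2) on deterministic initial conditions $\boldsymbol{\pi}^{(N)}$ for some $\varepsilon>0$). Let $(\rho_k)_{k\in\mathbb{N}_0}$ be a strictly decreasing sequence in $(0,1)$ with $\rho_k\downarrow\rho>0$ and $\rho_k-\rho_{k+1}=f_k$ (after rescaling $(f_k)$ if necessary), and define the stopping times $$\mathcal{T}_k:=\inf\Big\{t>0:\ \langle m\mathbf{1}_{m\ge2^i},\bar{\mathbf{L}}^{(N)}_t\rangle/\langle m\mathbf{1}_{m\ge1},\boldsymbol{\pi}^{(N)}\rangle\ge\rho_i\ \text{for } i=0,1,\dots,k\Big\}.$$ Then for all sufficiently large $N$ and every $k\le\log_2(\psi(N))$, $\mathbb{E}^{N,\boldsymbol{\pi}^{(N)}}[\mathcal{T}_k]<\infty$.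
   Context: $(E,\mathcal{B})$ measurable space, $m:E\to(0,\infty)$ mass function, $K$ coagulation kernel: measurable in $(x,y)$, a measure in the last argument, symmetric, $\bar K(x,y):=K(x,y,E)<\infty$, $m(z)=m(x)+m(y)$ for $K(x,y,\cdot)$-a.e. $z$. Process $\mathbf{L}^{(N)}_t$ on finite point measures: each pair of clusters of types $x,y$ merges at exponential rate $\bar K(x,y)$ into one of type $z\sim K(x,y,\cdot)/\bar K(x,y)$; $\bar{\mathbf{L}}^{(N)}_t:=\mathbf{L}^{(N)}_{t/N}/N$ started at $\bar{\mathbf{L}}^{(N)}_0=\boldsymbol{\pi}^{(N)}$; $\langle f,\mu\rangle=\int f\mathrm d\mu$; $\mathbb{E}^{N,\boldsymbol{\pi}^{(N)}}$ the corresponding expectation. Assumptions, with $\xi:\mathbb{N}\to\mathbb{N}$ and $\psi$ non-decreasing, $\psi(N)\to\infty$: (A1) partitions $\mathscr{P}^{(j)}$ of $E$, $|\mathscr{P}^{(j)}|\le\xi(N)$, with $c'(P,j):=\inf\{\bar K(x,y):2^j\le m(x),m(y)<2^{j+1},x,y\in P\}>0$ for all $P\in\mathscr{P}^{(j)}$; (A2) a strictly decreasing summable positive sequence $(f_j)_{j\ge0}$ with $\limsup_N\sum_{j=0}^{\log_2\psi(N)}\frac{2^j}{f_j^2}\sum_{P\in\mathscr{P}^{(j)}}c'(P,j)^{-1}<\infty$; (A3) $\psi(N)\xi(N)/N\to0$. (I1) $\langle m\mathbf{1}_{m\ge1},\boldsymbol{\pi}^{(N)}\rangle>\varepsilon$,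 $\boldsymbol{\pi}^{(N)}(E)<\infty$; (I2) some $g_{\boldsymbol{\pi}^{(N)}}<\infty$ with $\int\bar{\mathbf{L}}^{(N)}_s(\mathrm dx)\bar{\mathbf{L}}^{(N)}_s(\mathrm dy)\bar K(x,y)m(x)\le g_{\boldsymbol{\pi}^{(N)}}$ for all $s\ge0$. *)

theory Defs
  imports "HOL-Probability.Probability" "HOL-Library.Multiset"
begin

text \<open>
  The type space is a measurable space M (points of type 'a, E = space M).
  A finite point measure on E (a configuration of clusters, one Dirac mass per cluster)
  is represented by a multiset of types.  The unscaled Marcus--Lushnikov process L^(N)
  lives on multisets; the rescaled process is  Lbar_t = L_(t/N) / N, so integrals against
  rescaled measures carry a factor 1/N (see pairing), and in rescaled time every pair of
  clusters of types x, y merges at rate Kbar(x,y)/N.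
\<close>

definition pairing :: "nat \<Rightarrow> ('a \<Rightarrow> real) \<Rightarrow> 'a multiset \<Rightarrow> real" where
  "pairing N f L = (\<Sum>x\<in>#L. f x) / real N"

definition Kbar :: "('a \<Rightarrow> 'a \<Rightarrow> 'a measure) \<Rightarrow> 'a \<Rightarrow> 'a \<Rightarrow> real" where
  "Kbar K x y = measure (K x y) (space (K x y))"

text \<open>Weight of the ordered type pair (x,y) in configuration L, normalised so that summing
  over all ordered type pairs gives the sum of Kbar over all unordered pairs of distinct
  clusters: for x \<noteq> y there are count x * count y cluster pairs (each ordered type pair
  gets half of it), for x = y there are (count x choose 2) cluster pairs.\<close>
definition pair_weight :: "('a \<Rightarrow> 'a \<Rightarrow> 'a measure) \<Rightarrow> 'a multiset \<Rightarrow> 'a \<times> 'a \<Rightarrow> real" where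
  "pair_weight K L p = (case p of (x, y) \<Rightarrow>
     (if x = y then real (count L x choose 2) * Kbar K x x
      else real (count L x) * real (count L y) * Kbar K x y / 2))"

definition total_rate :: "('a \<Rightarrow> 'a \<Rightarrow> 'a measure) \<Rightarrow> 'a multiset \<Rightarrow> real" where
  "total_rate K L = (\<Sum>p\<in>set_mset L \<times> set_mset L. pair_weight K L p)"

definition pair_choice :: "('a \<Rightarrow> 'a \<Rightarrow> 'a measure) \<Rightarrow> 'a multiset \<Rightarrow> ('a \<times> 'a) measure" where
  "pair_choice K L = density (count_space UNIV) (\<lambda>p. ennreal (pair_weight K L p / total_rate K L))"

definition merge_law :: "('a \<Rightarrow> 'a \<Rightarrow> 'a measure) \<Rightarrow> 'a \<Rightarrow> 'a \<Rightarrow> 'a measure" where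
  "merge_law K x y = scale_measure (ennreal (1 / Kbar K x y)) (K x y)"

definition holding_law :: "nat \<Rightarrow> ('a \<Rightarrow> 'a \<Rightarrow> 'a measure) \<Rightarrow> 'a multiset \<Rightarrow> real measure" where
  "holding_law N K L = density lborel (exponential_density (total_rate K L / real N))"

text \<open>
  hit_aux N K C n L: law (a measure on [0,\<infinity>]) of the hitting time
  inf {t > 0. C (state at rescaled time t)} of the rescaled coagulation process started in
  configuration L, built from the standard jump-chain / exponential-holding-time description
  of the Markov jump process: if C holds now the time is 0; if no jump is possible
  (total rate 0) the state is frozen forever and the time is \<infinity>; otherwise wait an
  Exp(total_rate/N) time, merge a pair (x,y) chosen with probability proportional to its
  rate into a cluster of type z ~ K(x,y,.)/Kbar(x,y), and continue.  Since each jump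
  reduces the number of clusters by one, n = size L steps of recursion suffice (with fewer
  than two clusters no jump is possible).
\<close>
fun hit_aux :: "nat \<Rightarrow> ('a \<Rightarrow> 'a \<Rightarrow> 'a measure) \<Rightarrow> ('a multiset \<Rightarrow> bool) \<Rightarrow> nat \<Rightarrow> 'a multiset
    \<Rightarrow> ennreal measure" where
  "hit_aux N K C 0 L = return borel (if C L then 0 else \<infinity>)"
| "hit_aux N K C (Suc n) L =
     (if C L then return borel 0
      else if total_rate K L = 0 then return borel \<infinity>
      else Giry_Monad.bind (holding_law N K L) (\<lambda>\<tau>.
             Giry_Monad.bind
               (Giry_Monad.bind (pair_choice K L) (\<lambda>(x, y).
                  Giry_Monad.bind (merge_law K x y) (\<lambda>z.
                    hit_aux N K C n (L - {#x, y#} + {#z#}))))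
               (\<lambda>t. return borel (ennreal \<tau> + t))))"

definition hit_law :: "nat \<Rightarrow> ('a \<Rightarrow> 'a \<Rightarrow> 'a measure) \<Rightarrow> ('a multiset \<Rightarrow> bool) \<Rightarrow> 'a multiset
    \<Rightarrow> ennreal measure" where
  "hit_law N K C L = hit_aux N K C (size L) L"

definition expected_hitting_time ::
    "nat \<Rightarrow> ('a \<Rightarrow> 'a \<Rightarrow> 'a measure) \<Rightarrow> ('a multiset \<Rightarrow> bool) \<Rightarrow> 'a multiset \<Rightarrow> ennreal" where
  "expected_hitting_time N K C L = (\<integral>\<^sup>+ t. t \<partial>hit_law N K C L)"

text \<open>
  always_AE K P n L: almost surely every configuration visited by the process started in L
  satisfies P.  (Every configuration of the jump chain is occupied for a positive amount of
  time, and the process is constant between jumps, so this is the same as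
  "almost surely P(L_s) for all s \<ge> 0".)
\<close>
fun always_AE :: "('a \<Rightarrow> 'a \<Rightarrow> 'a measure) \<Rightarrow> ('a multiset \<Rightarrow> bool) \<Rightarrow> nat \<Rightarrow> 'a multiset \<Rightarrow> bool" where
  "always_AE K P 0 L = P L"
| "always_AE K P (Suc n) L =
     (P L \<and> (\<forall>x y. pair_weight K L (x, y) > 0 \<longrightarrow>
        (AE z in K x y. always_AE K P n (L - {#x, y#} + {#z#}))))"

definition always_visited :: "('a \<Rightarrow> 'a \<Rightarrow> 'a measure) \<Rightarrow> ('a multiset \<Rightarrow> bool) \<Rightarrow> 'a multiset \<Rightarrow> bool" where
  "always_visited K P L = always_AE K P (size L) L"

definition c_prime :: "('a \<Rightarrow> 'a \<Rightarrow> 'a measure) \<Rightarrow> ('a \<Rightarrow> real) \<Rightarrow> 'a set \<Rightarrow> nat \<Rightarrow> ennreal" where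
  "c_prime K m P j = Inf {ennreal (Kbar K x y) | x y. x \<in> P \<and> y \<in> P \<and>
      2 ^ j \<le> m x \<and> m x < 2 ^ (j + 1) \<and> 2 ^ j \<le> m y \<and> m y < 2 ^ (j + 1)}"

definition is_partition :: "'a set \<Rightarrow> 'a set set \<Rightarrow> bool" where
  "is_partition E \<P> \<longleftrightarrow> \<Union>\<P> = E \<and> {} \<notin> \<P> \<and> disjoint \<P>"

definition stop_cond :: "nat \<Rightarrow> ('a \<Rightarrow> real) \<Rightarrow> (nat \<Rightarrow> real) \<Rightarrow> 'a multiset \<Rightarrow> nat
    \<Rightarrow> 'a multiset \<Rightarrow> bool" where
  "stop_cond N m \<rho> L0 k L \<longleftrightarrow> (\<forall>i\<le>k.
     pairing N (\<lambda>x. if m x \<ge> 2 ^ i then m x else 0) L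
       / pairing N (\<lambda>x. if m x \<ge> 1 then m x else 0) L0 \<ge> \<rho> i)"

end

theory Submission
  imports Defs
begin

(*
  Between jumps the rescaled process waits an exponential time of mean N / r, where r is the
  total jump rate, and every jump removes a cluster. Hence E[T] <= (number of clusters) * N / delta
  as soon as r >= delta > 0 in every configuration visited before T.

  Such a delta exists for T = T_k. Coagulation never decreases the mass carried by clusters of
  mass >= 1. If T_k has not yet occurred, then for some i <= k the clusters with mass in [1, 2^i)
  carry more than (1 - rho_i) times the initial mass, which by (A3) exceeds 2 xi(N) 2^i. A
  configuration with at most one cluster in each cell P of each partition P^(j), j < i, restricted
  to the dyadic band [2^j, 2^(j+1)), carries at most xi(N) 2^(j+1) in that band; so some cell holds
  two clusters of a common band, and they merge at rate at least c'(P, j). The minimum of the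
  finitely many c'(P, j), j < k, is the required delta.
*)

section \<open>Mean bounds in the Giry monad\<close>

definition borel_or_empty :: "ennreal measure \<Rightarrow> bool" where
  "borel_or_empty \<mu> \<longleftrightarrow> sets \<mu> = sets (borel :: ennreal measure) \<or> space \<mu> = {}"

text \<open>Vacuous unless the \<sigma>-algebra is the Borel one: the Giry monad's bind yields junk
  measures with other \<sigma>-algebras when a kernel is evaluated outside its intended domain.\<close>
definition subprob_mean_le :: "ennreal measure \<Rightarrow> ennreal \<Rightarrow> bool" where
  "subprob_mean_le \<mu> B \<longleftrightarrow> (sets \<mu> = sets (borel :: ennreal measure) \<longrightarrow>
      emeasure \<mu> (space \<mu>) \<le> 1 \<and> (\<integral>\<^sup>+t. t \<partial>\<mu>) \<le> B)"

lemma nn_integral_le_if_borel_or_empty: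
  assumes "borel_or_empty \<mu>" and "subprob_mean_le \<mu> B"
  shows "(\<integral>\<^sup>+t. t \<partial>\<mu>) \<le> B"
  using assms by (auto simp: borel_or_empty_def subprob_mean_le_def nn_integral_empty)

lemma subprob_mean_le_if_space_empty:
  assumes "space \<mu> = {}"
  shows "subprob_mean_le \<mu> B"
proof -
  have "sets \<mu> = {{}}"
    using assms by (simp add: space_empty_iff)
  moreover have "UNIV \<in> sets (borel :: ennreal measure)"
    by simp
  ultimately have "sets \<mu> \<noteq> sets (borel :: ennreal measure)"
    by (metis UNIV_not_empty singletonD)
  then show ?thesis
    by (simp add: subprob_mean_le_def)
qed

lemma borel_or_empty_bind:
  assumes "space M \<noteq> {} \<Longrightarrow> borel_or_empty (g (SOME x. x \<in> space M))"
  shows "borel_or_empty (bind M g)"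
proof (cases "space M = {}")
  case False
  then have "sets (bind M g) = sets (g (SOME x. x \<in> space M))"
    by (simp add: bind_nonempty)
  moreover from this have "space (bind M g) = space (g (SOME x. x \<in> space M))"
    by (rule sets_eq_imp_space_eq)
  ultimately show ?thesis
    using assms False by (simp add: borel_or_empty_def)
qed (simp add: bind_empty borel_or_empty_def)

lemma emeasure_distr_le_preimage:
  "emeasure (distr M N g) A \<le> emeasure M (g -` A \<inter> space M)"
  unfolding distr_def emeasure_measure_of_conv by auto

text \<open>Unlike \<open>AE_distr_iff\<close>, this needs no measurability of \<open>g\<close>.\<close>
lemma AE_distr_of_AE:
  assumes "AE x in M. P (g x)" and "{y \<in> space N. \<not> P y} \<in> sets N"
  shows "AE y in distr M N g. P y"
proof -
  obtain Z where Z: "Z \<in> null_sets M" "{x \<in> space M. \<not> P (g x)} \<subseteq> Z"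
    using assms(1) unfolding eventually_ae_filter by auto
  let ?bad = "{y \<in> space N. \<not> P y}"
  have "emeasure (distr M N g) ?bad \<le> emeasure M (g -` ?bad \<inter> space M)"
    by (rule emeasure_distr_le_preimage)
  also have "\<dots> \<le> emeasure M Z"
    using Z by (intro emeasure_mono) auto
  also have "\<dots> = 0"
    using Z(1) by auto
  finally have "emeasure (distr M N g) ?bad = 0"
    by simp
  then show ?thesis
    using assms(2) by (intro AE_I[where N = ?bad]) auto
qed

lemma subprob_mean_le_join:
  assumes sets_D: "sets D = sets (subprob_algebra (borel :: ennreal measure))"
    and D_le_1: "emeasure D (space D) \<le> 1"
    and mean: "AE \<mu> in D. (\<integral>\<^sup>+t. t \<partial>\<mu>) \<le> B"
  shows "emeasure (join D) (space (join D)) \<le> 1 \<and> (\<integral>\<^sup>+t. t \<partial>join D) \<le> B"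
proof
  have space_D: "space D = space (subprob_algebra borel)"
    using sets_D by (rule sets_eq_imp_space_eq)
  have "emeasure (join D) (space (join D)) = (\<integral>\<^sup>+\<mu>. emeasure \<mu> (space borel) \<partial>D)"
    using sets_D by (simp add: emeasure_join)
  also have "\<dots> \<le> (\<integral>\<^sup>+\<mu>. 1 \<partial>D)"
  proof (rule nn_integral_mono)
    fix \<mu> assume "\<mu> \<in> space D"
    then have "subprob_space \<mu>" "sets \<mu> = sets borel"
      by (auto simp: space_D space_subprob_algebra)
    then show "emeasure \<mu> (space borel) \<le> 1"
      by (metis sets_eq_imp_space_eq subprob_space.emeasure_space_le_1)
  qed
  finally show "emeasure (join D) (space (join D)) \<le> 1"
    using D_le_1 by simp
  have "(\<integral>\<^sup>+t. t \<partial>join D) = (\<integral>\<^sup>+\<mu>. (\<integral>\<^sup>+t. t \<partial>\<mu>) \<partial>D)"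
    using sets_D by (intro nn_integral_join) auto
  also have "\<dots> \<le> (\<integral>\<^sup>+\<mu>. B \<partial>D)"
    using mean by (rule nn_integral_mono_AE)
  also have "\<dots> \<le> B"
    using D_le_1 by (simp add: mult_left_le)
  finally show "(\<integral>\<^sup>+t. t \<partial>join D) \<le> B" .
qed

lemma subprob_mean_le_bind:
  assumes M_le_1: "emeasure M (space M) \<le> 1"
    and mean: "AE x in M. subprob_mean_le (g x) B"
  shows "subprob_mean_le (bind M g) B"
proof (cases "space M = {}")
  case True
  then show ?thesis
    by (simp add: subprob_mean_le_if_space_empty space_bind_empty)
next
  case False
  define SB where "SB = subprob_algebra (borel :: ennreal measure)"
  define D where "D = distr M SB g"
  have "AE x in M. (\<lambda>\<mu>. \<mu> \<in> space SB \<longrightarrow> (\<integral>\<^sup>+t. t \<partial>\<mu>) \<le> B) (g x)"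
    using mean by eventually_elim (auto simp: subprob_mean_le_def SB_def space_subprob_algebra)
  moreover have "{\<mu> \<in> space SB. \<not> (\<mu> \<in> space SB \<longrightarrow> (\<integral>\<^sup>+t. t \<partial>\<mu>) \<le> B)} \<in> sets SB"
    unfolding SB_def by measurable
  ultimately have "AE \<mu> in D. \<mu> \<in> space SB \<longrightarrow> (\<integral>\<^sup>+t. t \<partial>\<mu>) \<le> B"
    unfolding D_def by (rule AE_distr_of_AE)
  then have mean_D: "AE \<mu> in D. (\<integral>\<^sup>+t. t \<partial>\<mu>) \<le> B"
    using AE_space by eventually_elim (simp add: D_def)
  have sets_D: "sets D = sets (subprob_algebra (borel :: ennreal measure))"
    by (simp add: D_def SB_def)
  have D_le_1: "emeasure D (space D) \<le> 1"
    unfolding D_def using emeasure_distr_le_preimage M_le_1 emeasure_space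
    by (metis order_trans space_distr)
  show ?thesis
    unfolding subprob_mean_le_def
  proof
    assume "sets (bind M g) = sets (borel :: ennreal measure)"
    then have "sets (g (SOME x. x \<in> space M)) = sets (borel :: ennreal measure)"
      using False by (simp add: bind_nonempty)
    then have "bind M g = join D"
      using False by (simp add: bind_nonempty D_def SB_def cong: subprob_algebra_cong)
    then show "emeasure (bind M g) (space (bind M g)) \<le> 1 \<and> (\<integral>\<^sup>+t. t \<partial>bind M g) \<le> B"
      using subprob_mean_le_join[OF sets_D D_le_1 mean_D] by simp
  qed
qed

lemma nn_integral_exponential_density_id:
  assumes "0 < r"
  shows "(\<integral>\<^sup>+\<tau>. ennreal \<tau> \<partial>density lborel (exponential_density r)) = ennreal (1 / r)"
proof -
  have "(\<integral>\<^sup>+\<tau>. ennreal \<tau> \<partial>density lborel (exponential_density r))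
      = (\<integral>\<^sup>+\<tau>. ennreal (exponential_density r \<tau>) * ennreal \<tau> \<partial>lborel)"
    using assms by (intro nn_integral_density) (auto simp: exponential_density_nonneg)
  also have "\<dots> = (\<integral>\<^sup>+\<tau>. ennreal (exponential_density r \<tau> * \<tau> ^ 1) \<partial>lborel)"
    using assms by (intro nn_integral_cong)
      (auto simp: exponential_density_def ennreal_mult'[symmetric] ennreal_neg)
  also have "\<dots> = ennreal (1 / r)"
    using nn_integral_erlang_ith_moment[OF assms, of 0 1] by simp
  finally show ?thesis .
qed

lemma nn_integral_bind_shift_le:
  assumes sets_R: "sets R = sets (borel :: ennreal measure)" and "subprob_mean_le R B"
  shows "(\<integral>\<^sup>+u. u \<partial>bind R (\<lambda>t. return borel (ennreal \<tau> + t))) \<le> ennreal \<tau> + B"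
proof -
  have R_le_1: "emeasure R (space R) \<le> 1" and mean_R: "(\<integral>\<^sup>+t. t \<partial>R) \<le> B"
    using assms by (auto simp: subprob_mean_le_def)
  have "(\<integral>\<^sup>+u. u \<partial>bind R (\<lambda>t. return borel (ennreal \<tau> + t)))
      = (\<integral>\<^sup>+t. (\<integral>\<^sup>+u. u \<partial>return borel (ennreal \<tau> + t)) \<partial>R)"
    by (rule nn_integral_bind[where B = borel]) (auto simp: measurable_cong_sets[OF sets_R refl])
  also have "\<dots> = (\<integral>\<^sup>+t. ennreal \<tau> \<partial>R) + (\<integral>\<^sup>+t. t \<partial>R)"
    by (simp add: nn_integral_return nn_integral_add measurable_cong_sets[OF sets_R refl])
  also have "\<dots> \<le> ennreal \<tau> + B"
    using R_le_1 mean_R by (intro add_mono) (auto simp: mult_left_le)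
  finally show ?thesis .
qed

lemma subprob_mean_le_exponential_delay:
  fixes R :: "ennreal measure" and r :: real
  assumes "borel_or_empty R" and "subprob_mean_le R B" and "0 < r"
  shows "subprob_mean_le (bind (density lborel (exponential_density r))
            (\<lambda>\<tau>. bind R (\<lambda>t. return borel (ennreal \<tau> + t)))) (ennreal (1 / r) + B)"
proof (cases "space R = {}")
  case True
  then show ?thesis
    by (intro subprob_mean_le_if_space_empty) (simp add: bind_empty space_bind[where N = "count_space {}"])
next
  case False
  define H where "H = density lborel (exponential_density r)"
  have sets_R: "sets R = sets (borel :: ennreal measure)"
    using assms(1) False by (simp add: borel_or_empty_def)
  have H_prob: "prob_space H"
    unfolding H_def using assms(3) by (rule prob_space_exponential_density)
  have "subprob_space R"
    using assms(2) False sets_R by (intro subprob_spaceI) (auto simp: subprob_mean_le_def)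
  then have kernel: "(\<lambda>\<tau>. bind R (\<lambda>t. return borel (ennreal \<tau> + t)))
      \<in> measurable H (subprob_algebra borel)"
    using sets_R unfolding H_def
    by (intro measurable_bind[where N = R]) (auto simp: space_subprob_algebra measurable_cong_sets[OF _ sets_R])
  have "(\<integral>\<^sup>+u. u \<partial>bind H (\<lambda>\<tau>. bind R (\<lambda>t. return borel (ennreal \<tau> + t))))
      = (\<integral>\<^sup>+\<tau>. (\<integral>\<^sup>+u. u \<partial>bind R (\<lambda>t. return borel (ennreal \<tau> + t))) \<partial>H)"
    using kernel by (rule nn_integral_bind[rotated]) simp
  also have "\<dots> \<le> (\<integral>\<^sup>+\<tau>. ennreal \<tau> + B \<partial>H)"
    using sets_R assms(2) by (intro nn_integral_mono nn_integral_bind_shift_le)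
  also have "\<dots> = ennreal (1 / r) + B"
    using nn_integral_exponential_density_id[OF assms(3)] prob_space.emeasure_space_1[OF H_prob]
    by (simp add: nn_integral_add H_def)
  finally have "(\<integral>\<^sup>+u. u \<partial>bind H (\<lambda>\<tau>. bind R (\<lambda>t. return borel (ennreal \<tau> + t))))
      \<le> ennreal (1 / r) + B" .
  moreover have "subprob_space (bind H (\<lambda>\<tau>. bind R (\<lambda>t. return borel (ennreal \<tau> + t))))"
    using H_prob kernel by (intro subprob_space_bind prob_space_imp_subprob_space)
  then have "emeasure (bind H (\<lambda>\<tau>. bind R (\<lambda>t. return borel (ennreal \<tau> + t))))
      (space (bind H (\<lambda>\<tau>. bind R (\<lambda>t. return borel (ennreal \<tau> + t))))) \<le> 1"
    by (rule subprob_space.emeasure_space_le_1)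
  ultimately show ?thesis
    unfolding H_def subprob_mean_le_def by simp
qed

section \<open>The coagulation jump chain\<close>

lemma Kbar_nonneg: "0 \<le> Kbar K x y"
  by (simp add: Kbar_def)

lemma pair_weight_nonneg: "0 \<le> pair_weight K L p"
  by (auto simp: pair_weight_def Kbar_nonneg split: prod.splits)

lemma total_rate_nonneg: "0 \<le> total_rate K L"
  by (simp add: total_rate_def pair_weight_nonneg sum_nonneg)

lemma pair_weight_eq_0_outside:
  assumes "p \<notin> set_mset L \<times> set_mset L"
  shows "pair_weight K L p = 0"
proof -
  obtain x y where p: "p = (x, y)"
    by force
  with assms have "count L x = 0 \<or> count L y = 0"
    by (auto simp: not_in_iff[symmetric])
  with p show ?thesis
    by (auto simp: pair_weight_def)
qed

lemma Kbar_pos_if_pair_weight_pos: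
  assumes "pair_weight K L (x, y) > 0"
  shows "Kbar K x y > 0"
  using assms Kbar_nonneg[of K x y]
  by (cases "x = y") (auto simp: pair_weight_def order_le_less)

lemma pair_subset_if_pair_weight_pos:
  assumes "pair_weight K L (x, y) > 0"
  shows "{#x, y#} \<subseteq># L"
proof (cases "x = y")
  case True
  have "2 \<le> count L x"
  proof (rule ccontr)
    assume "\<not> 2 \<le> count L x"
    with assms True show False
      by (simp add: pair_weight_def binomial_eq_0)
  qed
  with True show ?thesis
    by (simp add: subseteq_mset_def)
next
  case False
  then have "0 < real (count L x) * real (count L y) * Kbar K x y"
    using assms by (simp add: pair_weight_def)
  then have "0 < count L x" "0 < count L y"
    by (auto simp: zero_less_mult_iff leD[OF Kbar_nonneg])
  with False show ?thesis
    by (auto simp: subseteq_mset_def Suc_le_eq)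
qed

lemma emeasure_pair_choice:
  assumes "total_rate K L > 0"
  shows "emeasure (pair_choice K L) (space (pair_choice K L)) = 1"
proof -
  have "emeasure (pair_choice K L) (space (pair_choice K L))
      = (\<integral>\<^sup>+p. ennreal (pair_weight K L p / total_rate K L) \<partial>count_space UNIV)"
    unfolding pair_choice_def by (simp add: emeasure_density)
  also have "\<dots> = (\<Sum>p\<in>set_mset L \<times> set_mset L. ennreal (pair_weight K L p / total_rate K L))"
    by (rule nn_integral_count_space') (auto simp: pair_weight_eq_0_outside)
  also have "\<dots> = ennreal (\<Sum>p\<in>set_mset L \<times> set_mset L. pair_weight K L p / total_rate K L)"
    using assms by (intro sum_ennreal) (simp add: pair_weight_nonneg)
  also have "\<dots> = 1"
    using assms by (simp add: sum_divide_distrib[symmetric] total_rate_def)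
  finally show ?thesis .
qed

lemma AE_pair_choice:
  assumes "\<And>p. pair_weight K L p > 0 \<Longrightarrow> P p"
  shows "AE p in pair_choice K L. P p"
  unfolding pair_choice_def using assms
  by (subst AE_density) (auto simp: AE_count_space zero_less_divide_iff leD[OF pair_weight_nonneg])

lemma emeasure_merge_law:
  assumes "Kbar K x y > 0" and "emeasure (K x y) (space (K x y)) < \<infinity>"
  shows "emeasure (merge_law K x y) (space (merge_law K x y)) = 1"
proof -
  have "emeasure (K x y) (space (K x y)) = ennreal (Kbar K x y)"
    using assms(2) unfolding Kbar_def by (simp add: emeasure_eq_ennreal_measure)
  then show ?thesis
    using assms(1) by (simp add: merge_law_def space_scale_measure ennreal_mult'[symmetric])
qed

lemma AE_merge_law:
  assumes "AE z in K x y. P z"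
  shows "AE z in merge_law K x y. P z"
proof -
  obtain Z where "Z \<in> null_sets (K x y)" "{z \<in> space (K x y). \<not> P z} \<subseteq> Z"
    using assms unfolding eventually_ae_filter by auto
  then show ?thesis
    unfolding merge_law_def by (intro AE_I[of _ _ Z]) (auto simp: space_scale_measure null_sets_def)
qed

lemma borel_or_empty_hit_aux: "borel_or_empty (hit_aux N K C n L)"
proof (induction n arbitrary: L)
  case 0
  then show ?case
    by (simp add: borel_or_empty_def)
next
  case (Suc n)
  then show ?case
    by (auto simp: borel_or_empty_def split: prod.splits
        intro!: borel_or_empty_bind[unfolded borel_or_empty_def])
qed

lemma subprob_mean_le_jump:
  assumes "0 < total_rate K L"
    and K_fin: "\<And>x y. pair_weight K L (x, y) > 0 \<Longrightarrow> emeasure (K x y) (space (K x y)) < \<infinity>"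
    and mean: "\<And>x y. pair_weight K L (x, y) > 0 \<Longrightarrow>
          AE z in K x y. subprob_mean_le (F (L - {#x, y#} + {#z#})) B"
  shows "subprob_mean_le (bind (pair_choice K L) (\<lambda>(x, y).
      bind (merge_law K x y) (\<lambda>z. F (L - {#x, y#} + {#z#})))) B"
proof (rule subprob_mean_le_bind)
  show "emeasure (pair_choice K L) (space (pair_choice K L)) \<le> 1"
    using emeasure_pair_choice[OF assms(1)] by simp
  show "AE p in pair_choice K L. subprob_mean_le
      ((\<lambda>(x, y). bind (merge_law K x y) (\<lambda>z. F (L - {#x, y#} + {#z#}))) p) B"
  proof (rule AE_pair_choice)
    fix p assume "pair_weight K L p > 0"
    moreover obtain x y where p: "p = (x, y)"
      by force
    ultimately have pos: "pair_weight K L (x, y) > 0"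
      by simp
    have "subprob_mean_le (bind (merge_law K x y) (\<lambda>z. F (L - {#x, y#} + {#z#}))) B"
      using emeasure_merge_law[OF Kbar_pos_if_pair_weight_pos[OF pos] K_fin[OF pos]]
      by (intro subprob_mean_le_bind AE_merge_law mean[OF pos]) simp
    then show "subprob_mean_le ((\<lambda>(x, y). bind (merge_law K x y) (\<lambda>z. F (L - {#x, y#} + {#z#}))) p) B"
      by (simp add: p)
  qed
qed

lemma subprob_mean_le_hit_aux:
  fixes Inv :: "'a multiset \<Rightarrow> bool" and \<delta> :: real
  assumes rate: "\<And>L. Inv L \<Longrightarrow> \<not> C L \<Longrightarrow> \<delta> \<le> total_rate K L"
    and \<delta>: "0 < \<delta>" and N: "0 < N"
    and K_fin: "\<And>L x y. Inv L \<Longrightarrow> pair_weight K L (x, y) > 0 \<Longrightarrow>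
          emeasure (K x y) (space (K x y)) < \<infinity>"
    and Inv_step: "\<And>L x y. Inv L \<Longrightarrow> pair_weight K L (x, y) > 0 \<Longrightarrow>
          AE z in K x y. Inv (L - {#x, y#} + {#z#})"
  shows "Inv L \<Longrightarrow> size L = n \<Longrightarrow> subprob_mean_le (hit_aux N K C n L) (real n * real N / \<delta>)"
proof (induction n arbitrary: L)
  case 0
  then have "C L"
    using rate[of L] \<delta> by (auto simp: total_rate_def)
  then show ?case
    by (simp add: subprob_mean_le_def nn_integral_return)
next
  case (Suc n)
  show ?case
  proof (cases "C L")
    case True
    then show ?thesis
      by (simp add: subprob_mean_le_def nn_integral_return)
  next
    case False
    have rate_L: "\<delta> \<le> total_rate K L"
      using rate Suc.prems(1) False .
    with \<delta> have rate_pos: "0 < total_rate K L"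
      by simp
    define R where "R = bind (pair_choice K L) (\<lambda>(x, y).
      bind (merge_law K x y) (\<lambda>z. hit_aux N K C n (L - {#x, y#} + {#z#})))"
    have "subprob_mean_le R (real n * real N / \<delta>)"
      unfolding R_def using rate_pos K_fin[OF Suc.prems(1)]
    proof (rule subprob_mean_le_jump)
      fix x y assume pos: "pair_weight K L (x, y) > 0"
      have sub: "{#x, y#} \<subseteq># L"
        using pos by (rule pair_subset_if_pair_weight_pos)
      then have "2 \<le> size L"
        using size_mset_mono[OF sub] by simp
      then have size: "size (L - {#x, y#} + {#z#}) = n" for z
        using sub Suc.prems(2) by (simp add: size_Diff_submset)
      show "AE z in K x y. subprob_mean_le
          (hit_aux N K C n (L - {#x, y#} + {#z#})) (real n * real N / \<delta>)"
        using Inv_step[OF Suc.prems(1) pos] by eventually_elim (rule Suc.IH[OF _ size])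
    qed
    moreover have "borel_or_empty R"
      unfolding R_def by (auto intro!: borel_or_empty_bind borel_or_empty_hit_aux split: prod.splits)
    ultimately have "subprob_mean_le (hit_aux N K C (Suc n) L)
        (ennreal (1 / (total_rate K L / real N)) + ennreal (real n * real N / \<delta>))"
      using False rate_pos N subprob_mean_le_exponential_delay[of R _ "total_rate K L / real N"]
      by (simp add: holding_law_def R_def)
    moreover have "1 / (total_rate K L / real N) \<le> real N / \<delta>"
      using rate_L \<delta> N rate_pos by (simp add: frac_le)
    then have "ennreal (1 / (total_rate K L / real N)) + ennreal (real n * real N / \<delta>)
        \<le> ennreal (real (Suc n) * real N / \<delta>)"
      using rate_pos \<delta> by (simp add: ennreal_plus[symmetric] distrib_right add_divide_distrib
          del: ennreal_plus)
    ultimately show ?thesis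
      unfolding subprob_mean_le_def by (auto intro: order_trans)
  qed
qed

lemma expected_hitting_time_finite_if_rate_bounded:
  fixes Inv :: "'a multiset \<Rightarrow> bool" and \<delta> :: real
  assumes "\<And>L. Inv L \<Longrightarrow> \<not> C L \<Longrightarrow> \<delta> \<le> total_rate K L"
    and "0 < \<delta>" and "0 < N"
    and "\<And>L x y. Inv L \<Longrightarrow> pair_weight K L (x, y) > 0 \<Longrightarrow>
          emeasure (K x y) (space (K x y)) < \<infinity>"
    and "\<And>L x y. Inv L \<Longrightarrow> pair_weight K L (x, y) > 0 \<Longrightarrow>
          AE z in K x y. Inv (L - {#x, y#} + {#z#})"
    and "Inv L"
  shows "expected_hitting_time N K C L < \<infinity>"
proof -
  have "expected_hitting_time N K C L \<le> ennreal (real (size L) * real N / \<delta>)"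
    unfolding expected_hitting_time_def hit_law_def
    using subprob_mean_le_hit_aux[OF assms(1-5) assms(6) refl]
    by (intro nn_integral_le_if_borel_or_empty borel_or_empty_hit_aux)
  also have "\<dots> < \<infinity>"
    by simp
  finally show ?thesis .
qed

section \<open>Clusters in dyadic mass bands\<close>

definition in_band :: "('a \<Rightarrow> real) \<Rightarrow> nat \<Rightarrow> 'a \<Rightarrow> bool" where
  "in_band m j x \<longleftrightarrow> 2 ^ j \<le> m x \<and> m x < 2 ^ (j + 1)"

lemma exists_in_band:
  assumes "1 \<le> m x" and "m x < 2 ^ i"
  shows "\<exists>j<i. in_band m j x"
  using assms(2)
proof (induction i)
  case (Suc i)
  then show ?case
    using assms(1) by (cases "m x < 2 ^ i") (auto simp: in_band_def intro: less_SucI)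
qed (use assms(1) in simp)

lemma c_prime_le_Kbar:
  assumes "x \<in> P" "y \<in> P" "in_band m j x" "in_band m j y"
  shows "c_prime K m P j \<le> ennreal (Kbar K x y)"
  unfolding c_prime_def using assms by (intro Inf_lower) (auto simp: in_band_def)

lemma Kbar_le_total_rate:
  assumes sub: "{#x, y#} \<subseteq># L" and sym: "K x y = K y x"
  shows "Kbar K x y \<le> total_rate K L"
proof (cases "x = y")
  case True
  then have "2 \<le> count L x"
    using mset_subset_eq_count[OF sub, of x] by simp
  then have "count L x choose 2 \<noteq> 0"
    by (simp add: binomial_eq_0_iff)
  then have "1 \<le> real (count L x choose 2)"
    by linarith
  then have "Kbar K x y \<le> pair_weight K L (x, y)"
    using True mult_right_mono[OF _ Kbar_nonneg, of 1 _ K x x] by (simp add: pair_weight_def)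
  also have "\<dots> \<le> total_rate K L"
    unfolding total_rate_def using sub
    by (intro member_le_sum) (auto simp: pair_weight_nonneg dest: mset_subset_eqD)
  finally show ?thesis .
next
  case False
  have "x \<in># L" "y \<in># L"
    using sub by (auto dest: mset_subset_eqD)
  then have "1 \<le> count L x" "1 \<le> count L y"
    by (simp_all add: Suc_le_eq)
  then have "1 \<le> real (count L x) * real (count L y)"
    using mult_mono[of 1 "real (count L x)" 1 "real (count L y)"] by simp
  then have "Kbar K x y \<le> real (count L x) * real (count L y) * Kbar K x y"
    using mult_right_mono[OF _ Kbar_nonneg, of 1 _ K x y] by simp
  also have "\<dots> = (\<Sum>p\<in>{(x, y), (y, x)}. pair_weight K L p)"
    using False sym by (simp add: pair_weight_def Kbar_def field_simps)
  also have "\<dots> \<le> total_rate K L"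
    unfolding total_rate_def using \<open>x \<in># L\<close> \<open>y \<in># L\<close>
    by (intro sum_mono2) (auto simp: pair_weight_nonneg)
  finally show ?thesis .
qed

lemma pair_subset_if_size_ge_2:
  assumes "2 \<le> size F"
  shows "\<exists>x y. {#x, y#} \<subseteq># F"
proof -
  obtain x F' where F: "F = add_mset x F'"
    using assms by (metis Suc_1 Suc_le_D size_eq_Suc_imp_eq_union)
  then obtain y F'' where "F' = add_mset y F''"
    using assms by (metis Suc_le_D Suc_le_mono numeral_2_eq_2 size_add_mset size_eq_Suc_imp_eq_union)
  with F have "{#x, y#} \<subseteq># F"
    by simp
  then show ?thesis
    by blast
qed

lemma c_prime_le_total_rate:
  assumes sym: "\<And>x y. x \<in># L \<Longrightarrow> y \<in># L \<Longrightarrow> K x y = K y x"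
    and collision: "2 \<le> size (filter_mset (\<lambda>x. x \<in> P \<and> in_band m j x) L)"
  shows "c_prime K m P j \<le> ennreal (total_rate K L)"
proof -
  obtain x y where xy: "{#x, y#} \<subseteq># filter_mset (\<lambda>x. x \<in> P \<and> in_band m j x) L"
    using pair_subset_if_size_ge_2[OF collision] by blast
  then have "x \<in> P" "y \<in> P" "in_band m j x" "in_band m j y"
    by (auto dest: mset_subset_eqD)
  then have c_le: "c_prime K m P j \<le> ennreal (Kbar K x y)"
    by (rule c_prime_le_Kbar)
  have sub: "{#x, y#} \<subseteq># L"
    using xy multiset_filter_subset subset_mset.order_trans by blast
  then have "x \<in># L" "y \<in># L"
    by (auto dest: mset_subset_eqD)
  with sub sym have "Kbar K x y \<le> total_rate K L"
    by (intro Kbar_le_total_rate) auto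
  with c_le show ?thesis
    by (meson ennreal_leI order_trans)
qed

lemma sum_mset_sum_swap: "(\<Sum>x\<in>#L. \<Sum>a\<in>A. f x a) = (\<Sum>a\<in>A. \<Sum>x\<in>#L. f x a)"
  by (induction L) (simp_all add: sum.distrib)

lemma sum_mset_filter_mset_if:
  "(\<Sum>x\<in>#L. if Q x then g x else 0) = (\<Sum>x\<in>#filter_mset Q L. g x)"
  by (induction L) simp_all

lemma sum_mset_filter_le_if_size_le_1:
  fixes g :: "'a \<Rightarrow> real"
  assumes "size (filter_mset Q L) \<le> 1" and "\<And>x. Q x \<Longrightarrow> g x \<le> b" and "0 \<le> b"
  shows "(\<Sum>x\<in>#filter_mset Q L. g x) \<le> b"
proof (cases "filter_mset Q L = {#}")
  case False
  then have "size (filter_mset Q L) \<noteq> 0"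
    by (simp only: size_eq_0_iff_empty not_False_eq_True)
  then have "size (filter_mset Q L) = 1"
    using assms(1) by linarith
  then obtain a where a: "filter_mset Q L = {#a#}"
    using size_1_singleton_mset by blast
  moreover have "Q a"
    using a by (metis filter_mset_eq_conv union_single_eq_member)
  ultimately show ?thesis
    using assms(2) by simp
next
  case True
  then show ?thesis
    using assms(3) by (simp only: True) simp
qed

lemma mass_below_le_sum_bands:
  fixes m :: "'a \<Rightarrow> real" and \<P> :: "nat \<Rightarrow> 'a set set"
  assumes cover: "\<And>j. j < i \<Longrightarrow> x \<in> \<Union>(\<P> j)" and fin: "\<And>j. j < i \<Longrightarrow> finite (\<P> j)"
  shows "(if 1 \<le> m x \<and> m x < 2 ^ i then m x else 0)
      \<le> (\<Sum>j<i. \<Sum>P\<in>\<P> j. if x \<in> P \<and> in_band m j x then m x else 0)"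
proof -
  have nonneg: "0 \<le> (if x \<in> P \<and> in_band m j x then m x else 0)" for j P
    unfolding in_band_def by (auto intro: order_trans[OF zero_le_power])
  show ?thesis
  proof (cases "1 \<le> m x \<and> m x < 2 ^ i")
    case True
    then obtain j where j: "j < i" "in_band m j x"
      using exists_in_band[of m x i] by blast
    obtain P where P: "P \<in> \<P> j" "x \<in> P"
      using cover[OF j(1)] by (rule UnionE)
    have "m x = (if x \<in> P \<and> in_band m j x then m x else 0)"
      using P j by simp
    also have "\<dots> \<le> (\<Sum>P\<in>\<P> j. if x \<in> P \<and> in_band m j x then m x else 0)"
      using P(1) fin[OF j(1)] by (intro member_le_sum nonneg)
    also have "\<dots> \<le> (\<Sum>j<i. \<Sum>P\<in>\<P> j. if x \<in> P \<and> in_band m j x then m x else 0)"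
      using j(1) by (intro member_le_sum sum_nonneg nonneg) auto
    finally show ?thesis
      using True by simp
  qed (auto intro: sum_nonneg nonneg)
qed

lemma sum_mset_mass_below_le:
  fixes m :: "'a \<Rightarrow> real" and \<P> :: "nat \<Rightarrow> 'a set set"
  assumes cover: "\<And>j. j < i \<Longrightarrow> set_mset L \<subseteq> \<Union>(\<P> j)"
    and fin: "\<And>j. j < i \<Longrightarrow> finite (\<P> j)"
    and no_collision: "\<And>j P. j < i \<Longrightarrow> P \<in> \<P> j \<Longrightarrow>
          size (filter_mset (\<lambda>x. x \<in> P \<and> in_band m j x) L) \<le> 1"
  shows "(\<Sum>x\<in>#L. if 1 \<le> m x \<and> m x < 2 ^ i then m x else 0)
      \<le> (\<Sum>j<i. real (card (\<P> j)) * 2 ^ (j + 1))"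
proof -
  have "(\<Sum>x\<in>#L. if 1 \<le> m x \<and> m x < 2 ^ i then m x else 0)
      \<le> (\<Sum>x\<in>#L. \<Sum>j<i. \<Sum>P\<in>\<P> j. if x \<in> P \<and> in_band m j x then m x else 0)"
  proof (intro sum_mset_mono mass_below_le_sum_bands fin)
    show "x \<in> \<Union>(\<P> j)" if "x \<in># L" and "j < i" for x j
      using cover[OF that(2)] that(1) by blast
  qed
  also have "\<dots> = (\<Sum>j<i. \<Sum>P\<in>\<P> j. \<Sum>x\<in>#filter_mset (\<lambda>x. x \<in> P \<and> in_band m j x) L. m x)"
    by (simp add: sum_mset_sum_swap sum_mset_filter_mset_if)
  also have "\<dots> \<le> (\<Sum>j<i. \<Sum>P\<in>\<P> j. 2 ^ (j + 1))"
    using no_collision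
    by (intro sum_mono sum_mset_filter_le_if_size_le_1) (auto simp: in_band_def)
  also have "\<dots> = (\<Sum>j<i. real (card (\<P> j)) * 2 ^ (j + 1))"
    by simp
  finally show ?thesis .
qed

lemma mass_above_1_superadditive:
  fixes a b :: real
  assumes "0 < a" and "0 < b"
  shows "(if 1 \<le> a then a else 0) + (if 1 \<le> b then b else 0) \<le> (if 1 \<le> a + b then a + b else 0)"
  using assms by auto

lemma stop_cond_if_no_collision:
  fixes m :: "'a \<Rightarrow> real" and \<P> :: "nat \<Rightarrow> 'a set set" and \<Psi> :: real and \<Xi> :: nat
  defines "\<Phi> L \<equiv> \<Sum>x\<in>#L. if 1 \<le> m x then m x else 0"
  assumes N: "0 < N"
    and cover: "\<And>j. j < k \<Longrightarrow> set_mset L \<subseteq> \<Union>(\<P> j)"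
    and card: "\<And>j. j < k \<Longrightarrow> finite (\<P> j) \<and> card (\<P> j) \<le> \<Xi>"
    and no_collision: "\<And>j P. j < k \<Longrightarrow> P \<in> \<P> j \<Longrightarrow>
          size (filter_mset (\<lambda>x. x \<in> P \<and> in_band m j x) L) \<le> 1"
    and pow: "2 ^ k \<le> \<Psi>"
    and small: "2 * \<Psi> * \<Xi> < (1 - \<rho> 0) * \<Phi> L0"
    and mass: "\<Phi> L0 \<le> \<Phi> L"
    and \<rho>_le: "\<And>i. i \<le> k \<Longrightarrow> \<rho> i \<le> \<rho> 0"
  shows "stop_cond N m \<rho> L0 k L"
  unfolding stop_cond_def
proof (intro allI impI)
  fix i assume "i \<le> k"
  define S where "S = (\<Sum>x\<in>#L. if 2 ^ i \<le> m x then m x else 0)"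
  define T where "T = (\<Sum>x\<in>#L. if 1 \<le> m x \<and> m x < 2 ^ i then m x else 0)"
  have "0 \<le> \<Psi>"
    using pow by (rule order_trans[rotated]) simp
  have "0 \<le> \<Phi> L0"
    unfolding \<Phi>_def using sum_mset_mono[of L0 "\<lambda>_. 0" "\<lambda>x. if 1 \<le> m x then m x else 0"]
    by simp
  moreover have "\<Phi> L0 \<noteq> 0"
    using small mult_nonneg_nonneg[OF \<open>0 \<le> \<Psi>\<close> of_nat_0_le_iff[of \<Xi>]] by auto
  ultimately have \<Phi>_pos: "0 < \<Phi> L0"
    by simp
  have "(\<Sum>j<i. (2::real) ^ (j + 1)) = 2 ^ (i + 1) - 2"
    by (induction i) simp_all
  then have geometric: "(\<Sum>j<i. (2::real) ^ (j + 1)) \<le> 2 * 2 ^ i"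
    by simp
  have "T \<le> (\<Sum>j<i. real (card (\<P> j)) * 2 ^ (j + 1))"
    unfolding T_def using \<open>i \<le> k\<close> cover card no_collision
    by (intro sum_mset_mass_below_le) auto
  also have "\<dots> \<le> (\<Sum>j<i. real \<Xi> * 2 ^ (j + 1))"
    using \<open>i \<le> k\<close> card by (intro sum_mono mult_right_mono) auto
  also have "\<dots> \<le> real \<Xi> * (2 * 2 ^ i)"
    using geometric by (simp add: sum_distrib_left[symmetric] mult_left_mono)
  also have "\<dots> \<le> real \<Xi> * (2 * \<Psi>)"
    using \<open>i \<le> k\<close> pow order_trans[OF power_increasing[of i k "2::real"]]
    by (intro mult_left_mono) auto
  also have "\<dots> < (1 - \<rho> 0) * \<Phi> L0"
    using small by (simp add: algebra_simps)
  also have "\<dots> \<le> (1 - \<rho> i) * \<Phi> L0"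
    using \<rho>_le[OF \<open>i \<le> k\<close>] \<Phi>_pos by (intro mult_right_mono) auto
  finally have "T < (1 - \<rho> i) * \<Phi> L0" .
  moreover have "\<Phi> L = S + T"
  proof -
    have "(if 1 \<le> m x then m x else 0)
        = (if 2 ^ i \<le> m x then m x else 0) + (if 1 \<le> m x \<and> m x < 2 ^ i then m x else 0)" for x
      using one_le_power[of "2::real" i] by (smt (verit))
    then show ?thesis
      unfolding \<Phi>_def S_def T_def by (simp add: sum_mset.distrib)
  qed
  ultimately have "\<rho> i * \<Phi> L0 \<le> S"
    using mass by (simp add: algebra_simps)
  then show "\<rho> i \<le> pairing N (\<lambda>x. if 2 ^ i \<le> m x then m x else 0) L
      / pairing N (\<lambda>x. if 1 \<le> m x then m x else 0) L0"
    using N \<Phi>_pos by (simp add: pairing_def S_def \<Phi>_def pos_le_divide_eq)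
qed

lemma exists_collision_if_not_stop_cond:
  fixes m :: "'a \<Rightarrow> real" and \<P> :: "nat \<Rightarrow> 'a set set" and \<Psi> :: real and \<Xi> :: nat
  defines "\<Phi> L \<equiv> \<Sum>x\<in>#L. if 1 \<le> m x then m x else 0"
  assumes N: "0 < N"
    and cover: "\<And>j. j < k \<Longrightarrow> set_mset L \<subseteq> \<Union>(\<P> j)"
    and card: "\<And>j. j < k \<Longrightarrow> finite (\<P> j) \<and> card (\<P> j) \<le> \<Xi>"
    and pow: "2 ^ k \<le> \<Psi>"
    and small: "2 * \<Psi> * \<Xi> < (1 - \<rho> 0) * \<Phi> L0"
    and mass: "\<Phi> L0 \<le> \<Phi> L"
    and \<rho>_le: "\<And>i. i \<le> k \<Longrightarrow> \<rho> i \<le> \<rho> 0"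
    and not_stop: "\<not> stop_cond N m \<rho> L0 k L"
  shows "\<exists>j<k. \<exists>P\<in>\<P> j. 2 \<le> size (filter_mset (\<lambda>x. x \<in> P \<and> in_band m j x) L)"
proof (rule ccontr)
  assume "\<not> ?thesis"
  then have "size (filter_mset (\<lambda>x. x \<in> P \<and> in_band m j x) L) < 2"
    if "j < k" and "P \<in> \<P> j" for j P
    using that by (auto simp: not_le)
  then have no_collision: "size (filter_mset (\<lambda>x. x \<in> P \<and> in_band m j x) L) \<le> 1"
    if "j < k" and "P \<in> \<P> j" for j P
    using that by fastforce
  have "stop_cond N m \<rho> L0 k L"
    by (rule stop_cond_if_no_collision[where m = m and \<rho> = \<rho> and L = L and \<P> = \<P>,
          OF N cover card no_collision pow small[unfolded \<Phi>_def] mass[unfolded \<Phi>_def] \<rho>_le])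
  with not_stop show False
    by contradiction
qed

section \<open>Finiteness of the expected stopping time\<close>

lemma finite_ennreal_pos_lower_bound:
  fixes g :: "'b \<Rightarrow> ennreal"
  assumes "finite A" and "\<And>a. a \<in> A \<Longrightarrow> 0 < g a"
  shows "\<exists>\<delta>>0. \<forall>a\<in>A. ennreal \<delta> \<le> g a"
  using assms
proof (induction A rule: finite_induct)
  case empty
  show ?case
    using zero_less_one by blast
next
  case (insert a A)
  then obtain \<delta> where \<delta>: "0 < \<delta>" "\<forall>b\<in>A. ennreal \<delta> \<le> g b"
    by blast
  define d where "d = enn2real (min 1 (g a))"
  have "min 1 (g a) < \<top>"
    by (simp add: min_less_iff_disj)
  then have "0 < d" "ennreal d \<le> g a"
    using insert.prems[of a] by (simp_all add: d_def enn2real_positive_iff)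
  have "ennreal (min \<delta> d) \<le> g b" if "b \<in> insert a A" for b
  proof (cases "b = a")
    case True
    then show ?thesis
      using order_trans[OF ennreal_leI[OF min.cobounded2] \<open>ennreal d \<le> g a\<close>] by simp
  next
    case False
    then show ?thesis
      using that \<delta>(2) order_trans[OF ennreal_leI[OF min.cobounded1]] by blast
  qed
  with \<delta>(1) \<open>0 < d\<close> show ?case
    by (intro exI[of _ "min \<delta> d"]) auto
qed

lemma sum_mset_merge_mono:
  fixes f :: "'a \<Rightarrow> real"
  assumes "{#x, y#} \<subseteq># L" and "f x + f y \<le> f z"
  shows "(\<Sum>u\<in>#L. f u) \<le> (\<Sum>u\<in>#L - {#x, y#} + {#z#}. f u)"
proof -
  obtain R where L: "L = {#x, y#} + R"
    using assms(1) by (auto simp: mset_subset_eq_exists_conv)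
  show ?thesis
    using assms(2) by (simp add: L)
qed

lemma sum_mset_mass_above_1_merge:
  fixes m :: "'a \<Rightarrow> real"
  assumes "{#x, y#} \<subseteq># L" and "0 < m x" and "0 < m y" and "m z = m x + m y"
  shows "(\<Sum>u\<in>#L. if 1 \<le> m u then m u else 0)
      \<le> (\<Sum>u\<in>#L - {#x, y#} + {#z#}. if 1 \<le> m u then m u else 0)"
  using assms(1)
proof (rule sum_mset_merge_mono)
  show "(if 1 \<le> m x then m x else 0) + (if 1 \<le> m y then m y else 0) \<le> (if 1 \<le> m z then m z else 0)"
    unfolding assms(4) using assms(2,3) by (rule mass_above_1_superadditive)
qed

lemma expected_hitting_time_stop_cond_finite:
  fixes M :: "'a measure" and m :: "'a \<Rightarrow> real" and K :: "'a \<Rightarrow> 'a \<Rightarrow> 'a measure"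
    and \<P> :: "nat \<Rightarrow> 'a set set" and \<Psi> :: real and \<Xi> :: nat
  defines "\<Phi> L \<equiv> \<Sum>x\<in>#L. if 1 \<le> m x then m x else 0"
  assumes m_pos: "\<And>x. x \<in> space M \<Longrightarrow> m x > 0"
    and K_sets: "\<And>x y. x \<in> space M \<Longrightarrow> y \<in> space M \<Longrightarrow> sets (K x y) = sets M"
    and K_sym: "\<And>x y. x \<in> space M \<Longrightarrow> y \<in> space M \<Longrightarrow> K x y = K y x"
    and K_fin: "\<And>x y. x \<in> space M \<Longrightarrow> y \<in> space M \<Longrightarrow> emeasure (K x y) (space M) < \<infinity>"
    and K_mass: "\<And>x y. x \<in> space M \<Longrightarrow> y \<in> space M \<Longrightarrow> AE z in K x y. m z = m x + m y"
    and partition: "\<And>j. is_partition (space M) (\<P> j)"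
    and card: "\<And>j. j < k \<Longrightarrow> finite (\<P> j) \<and> card (\<P> j) \<le> \<Xi>"
    and c_prime_pos: "\<And>j P. P \<in> \<P> j \<Longrightarrow> c_prime K m P j > 0"
    and L0_space: "set_mset L0 \<subseteq> space M"
    and N: "0 < N"
    and pow: "2 ^ k \<le> \<Psi>"
    and small: "2 * \<Psi> * \<Xi> < (1 - \<rho> 0) * \<Phi> L0"
    and \<rho>_le: "\<And>i. i \<le> k \<Longrightarrow> \<rho> i \<le> \<rho> 0"
  shows "expected_hitting_time N K (stop_cond N m \<rho> L0 k) L0 < \<infinity>"
proof -
  define Inv where "Inv L \<longleftrightarrow> set_mset L \<subseteq> space M \<and> \<Phi> L0 \<le> \<Phi> L" for L
  have "finite (SIGMA j:{..<k}. \<P> j)"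
    using card by (intro finite_SigmaI) auto
  then have "\<exists>\<delta>>0. \<forall>a\<in>(SIGMA j:{..<k}. \<P> j). ennreal \<delta> \<le> (case a of (j, P) \<Rightarrow> c_prime K m P j)"
    by (rule finite_ennreal_pos_lower_bound) (auto simp: c_prime_pos)
  then obtain \<delta> where \<delta>: "0 < \<delta>"
    "\<forall>a\<in>(SIGMA j:{..<k}. \<P> j). ennreal \<delta> \<le> (case a of (j, P) \<Rightarrow> c_prime K m P j)"
    by blast
  have rate: "\<delta> \<le> total_rate K L" if "Inv L" and "\<not> stop_cond N m \<rho> L0 k L" for L
  proof -
    have cover: "set_mset L \<subseteq> \<Union>(\<P> j)" if "j < k" for j
      using \<open>Inv L\<close> partition[of j] by (simp add: Inv_def is_partition_def)
    have mass: "\<Phi> L0 \<le> \<Phi> L"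
      using \<open>Inv L\<close> by (simp add: Inv_def)
    have "\<exists>j<k. \<exists>P\<in>\<P> j. 2 \<le> size (filter_mset (\<lambda>x. x \<in> P \<and> in_band m j x) L)"
      by (rule exists_collision_if_not_stop_cond[where m = m and \<rho> = \<rho> and L = L and \<P> = \<P>,
            OF N cover card pow small[unfolded \<Phi>_def] mass[unfolded \<Phi>_def] \<rho>_le that(2)])
    then obtain j P where j: "j < k" "P \<in> \<P> j"
      and "2 \<le> size (filter_mset (\<lambda>x. x \<in> P \<and> in_band m j x) L)"
      by blast
    then have "c_prime K m P j \<le> ennreal (total_rate K L)"
      using that(1) K_sym by (intro c_prime_le_total_rate) (auto simp: Inv_def)
    then have "ennreal \<delta> \<le> ennreal (total_rate K L)"
      using \<delta>(2) j by (auto intro: order_trans)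
    then show ?thesis
      by (simp add: total_rate_nonneg)
  qed
  have pair_space: "x \<in> space M" "y \<in> space M"
    if "Inv L" and "pair_weight K L (x, y) > 0" for L x y
    using that pair_subset_if_pair_weight_pos[OF that(2)] by (auto simp: Inv_def dest: mset_subset_eqD)
  have K_fin': "emeasure (K x y) (space (K x y)) < \<infinity>"
    if "Inv L" and "pair_weight K L (x, y) > 0" for L x y
    using K_fin[OF pair_space[OF that]] sets_eq_imp_space_eq[OF K_sets[OF pair_space[OF that]]] by simp
  have Inv_step: "AE z in K x y. Inv (L - {#x, y#} + {#z#})"
    if "Inv L" and "pair_weight K L (x, y) > 0" for L x y
    using K_mass[OF pair_space[OF that]] AE_space
  proof eventually_elim
    case (elim z)
    then have "z \<in> space M"
      using sets_eq_imp_space_eq[OF K_sets[OF pair_space[OF that]]] by simp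
    moreover have "\<Phi> L \<le> \<Phi> (L - {#x, y#} + {#z#})"
      unfolding \<Phi>_def
      by (rule sum_mset_mass_above_1_merge[OF pair_subset_if_pair_weight_pos[OF that(2)] m_pos m_pos elim(1)])
        (fact pair_space[OF that])+
    ultimately show ?case
      using that(1) by (auto simp: Inv_def dest: in_diffD)
  qed
  have "Inv L0"
    using L0_space by (simp add: Inv_def)
  show ?thesis
    by (rule expected_hitting_time_finite_if_rate_bounded[where Inv = Inv])
      (fact rate \<delta>(1) N K_fin' Inv_step \<open>Inv L0\<close>)+
qed


theorem lemma4p1:
  fixes M :: "'a measure" and m :: "'a \<Rightarrow> real" and K :: "'a \<Rightarrow> 'a \<Rightarrow> 'a measure"
    and \<xi> :: "nat \<Rightarrow> nat" and \<psi> :: "nat \<Rightarrow> real"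
    and \<P> :: "nat \<Rightarrow> 'a set set" and f :: "nat \<Rightarrow> real"
    and L0 :: "nat \<Rightarrow> 'a multiset" and \<epsilon> :: real
    and \<rho> :: "nat \<Rightarrow> real" and \<rho>lim :: real and c :: real
  assumes m_meas: "m \<in> borel_measurable M"
    and m_pos: "\<And>x. x \<in> space M \<Longrightarrow> m x > 0"
    and K_sets: "\<And>x y. x \<in> space M \<Longrightarrow> y \<in> space M \<Longrightarrow> sets (K x y) = sets M"
    and K_meas: "\<And>B. B \<in> sets M \<Longrightarrow> (\<lambda>(x, y). emeasure (K x y) B) \<in> borel_measurable (M \<Otimes>\<^sub>M M)"
    and K_sym: "\<And>x y. x \<in> space M \<Longrightarrow> y \<in> space M \<Longrightarrow> K x y = K y x"
    and K_fin: "\<And>x y. x \<in> space M \<Longrightarrow> y \<in> space M \<Longrightarrow> emeasure (K x y) (space M) < \<infinity>"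
    and K_mass: "\<And>x y. x \<in> space M \<Longrightarrow> y \<in> space M \<Longrightarrow> AE z in K x y. m z = m x + m y"
    and \<psi>_mono: "mono \<psi>" and \<psi>_lim: "filterlim \<psi> at_top sequentially"
    (* (A1) *)
    and A1_part: "\<And>j. is_partition (space M) (\<P> j)"
    and A1_card: "\<And>N j. real j \<le> log 2 (\<psi> N) \<Longrightarrow> finite (\<P> j) \<and> card (\<P> j) \<le> \<xi> N"
    and A1_pos: "\<And>j P. P \<in> \<P> j \<Longrightarrow> c_prime K m P j > 0"
    (* (A2) *)
    and f_pos: "\<And>j. f j > 0" and f_decr: "\<And>i j. i < j \<Longrightarrow> f j < f i" and f_summable: "summable f"
    and A2: "limsup (\<lambda>N. \<Sum>j\<in>{j. real j \<le> log 2 (\<psi> N)}.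
               ennreal (2 ^ j / (f j)\<^sup>2) * (\<Sum>P\<in>\<P> j. inverse (c_prime K m P j))) < \<infinity>"
    (* (A3) *)
    and A3: "(\<lambda>N. \<psi> N * real (\<xi> N) / real N) \<longlonglongrightarrow> 0"
    (* initial conditions pi^(N) = L0 N / N, and (I1), (I2) *)
    and L0_space: "\<And>N. set_mset (L0 N) \<subseteq> space M"
    and \<epsilon>_pos: "\<epsilon> > 0"
    and I1: "\<And>N. N > 0 \<Longrightarrow> pairing N (\<lambda>x. if m x \<ge> 1 then m x else 0) (L0 N) > \<epsilon>"
    and I2: "\<And>N. \<exists>g::real. always_visited K
               (\<lambda>L. (\<Sum>x\<in>#L. \<Sum>y\<in>#L. Kbar K x y * m x) / (real N)\<^sup>2 \<le> g) (L0 N)"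
    (* the thresholds rho_k *)
    and \<rho>_range: "\<And>k. 0 < \<rho> k \<and> \<rho> k < 1"
    and \<rho>_decr: "\<And>i j. i < j \<Longrightarrow> \<rho> j < \<rho> i"
    and \<rho>_lim: "\<rho> \<longlonglongrightarrow> \<rho>lim" and \<rho>lim_pos: "\<rho>lim > 0"
    and c_pos: "c > 0" and \<rho>_step: "\<And>k. \<rho> k - \<rho> (Suc k) = c * f k"
  shows "\<exists>N0. \<forall>N\<ge>N0. \<forall>k. real k \<le> log 2 (\<psi> N) \<longrightarrow>
           expected_hitting_time N K (stop_cond N m \<rho> (L0 N) k) (L0 N) < \<infinity>"
proof -
  have \<rho>0: "\<rho> 0 < 1"
    using \<rho>_range[of 0] by simp
  have \<rho>_le: "\<rho> i \<le> \<rho> 0" if "i \<le> k" for i k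
    using \<rho>_decr[of 0 i] by (cases "i = 0") auto
  have "\<forall>\<^sub>F N in sequentially. 1 \<le> \<psi> N"
    using \<psi>_lim by (simp add: filterlim_at_top)
  moreover have "\<forall>\<^sub>F N in sequentially. \<psi> N * real (\<xi> N) / real N < (1 - \<rho> 0) * \<epsilon> / 2"
    using \<rho>0 \<epsilon>_pos by (intro order_tendstoD(2)[OF A3]) simp
  moreover have "\<forall>\<^sub>F N in sequentially. 0 < N"
    by (rule eventually_gt_at_top)
  ultimately have "\<forall>\<^sub>F N in sequentially.
      1 \<le> \<psi> N \<and> \<psi> N * real (\<xi> N) / real N < (1 - \<rho> 0) * \<epsilon> / 2 \<and> 0 < N"
    by eventually_elim blast
  then obtain N0 where N0: "\<And>N. N0 \<le> N \<Longrightarrow>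
      1 \<le> \<psi> N \<and> \<psi> N * real (\<xi> N) / real N < (1 - \<rho> 0) * \<epsilon> / 2 \<and> 0 < N"
    unfolding eventually_sequentially by blast
  show ?thesis
  proof (intro exI allI impI)
    fix N k assume "N0 \<le> N" and k: "real k \<le> log 2 (\<psi> N)"
    then have \<psi>_ge_1: "1 \<le> \<psi> N" and N: "0 < N"
      and small: "\<psi> N * real (\<xi> N) / real N < (1 - \<rho> 0) * \<epsilon> / 2"
      using N0 by auto
    have pow: "2 ^ k \<le> \<psi> N"
      using k \<psi>_ge_1 by (simp add: le_log_iff powr_realpow)
    have card: "finite (\<P> j) \<and> card (\<P> j) \<le> \<xi> N" if "j < k" for j
      using A1_card[of j N] that k by simp
    have "real N * \<epsilon> < (\<Sum>x\<in>#L0 N. if 1 \<le> m x then m x else 0)"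
      using I1[OF N] N by (simp add: pairing_def pos_less_divide_eq field_simps)
    then have "(1 - \<rho> 0) * (real N * \<epsilon>) < (1 - \<rho> 0) * (\<Sum>x\<in>#L0 N. if 1 \<le> m x then m x else 0)"
      using \<rho>0 by (intro mult_strict_left_mono) simp_all
    moreover have "2 * \<psi> N * real (\<xi> N) < (1 - \<rho> 0) * (real N * \<epsilon>)"
      using small N by (simp add: pos_divide_less_eq field_simps)
    ultimately have small_mass:
      "2 * \<psi> N * real (\<xi> N) < (1 - \<rho> 0) * (\<Sum>x\<in>#L0 N. if 1 \<le> m x then m x else 0)"
      by linarith
    show "expected_hitting_time N K (stop_cond N m \<rho> (L0 N) k) (L0 N) < \<infinity>"
      by (rule expected_hitting_time_stop_cond_finite[where M = M and \<P> = \<P>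
            and \<Xi> = "\<xi> N" and \<Psi> = "\<psi> N"])
        (fact m_pos K_sets K_sym K_fin K_mass A1_part A1_pos L0_space N pow card small_mass \<rho>_le)+
  qed
qed

end
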